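(* Let $X$ be a Banach space and $f:X\to\mathbb R\cup\{+\infty\}$ a proper lower semicontinuous convex function with $S=\{x:f(x)\le0\}\ne\emptyset$. Let $K_f$ be the infimum of $K\ge 0$ such that $d(x,S)\le K\,(f(x))^+$ for all $x\in X$ ($K_f=+\infty$ if none). Then $$K_f^{-1}=\inf\Big\{\sup_{\|h\|\le1}\big(-f'(x;h)\big):\ 0<f(x)<\infty\Big\},$$ with conventions $1/0=\infty$, $1/\infty=0$, $\inf\emptyset=+\infty$.
   Context: $f'(x;h)=\lim_{t\downarrow0}t^{-1}(f(x+th)-f(x))\in[-\infty,+\infty]$ is the directional derivative of the convex function $f$ at $x\in\operatorname{dom}f$. *)

theory Defs
  imports "HOL-Analysis.Analysis"
begin

definition proper_fun :: "('a \<Rightarrow> ereal) \<Rightarrow> bool" where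
  "proper_fun f \<longleftrightarrow> (\<forall>x. f x \<noteq> -\<infinity>) \<and> (\<exists>x. f x < \<infinity>)"

definition lsc_fun :: "('a::topological_space \<Rightarrow> ereal) \<Rightarrow> bool" where
  "lsc_fun f \<longleftrightarrow> (\<forall>x. f x \<le> Liminf (at x) f)"

definition convex_fun :: "('a::real_vector \<Rightarrow> ereal) \<Rightarrow> bool" where
  "convex_fun f \<longleftrightarrow> convex {(x, r::real). f x \<le> ereal r}"

definition dir_deriv :: "('a::real_normed_vector \<Rightarrow> ereal) \<Rightarrow> 'a \<Rightarrow> 'a \<Rightarrow> ereal" where
  "dir_deriv f x h = Lim (at_right (0::real)) (\<lambda>t. (f (x + t *\<^sub>R h) - f x) / ereal t)"

text \<open>Error bound constant \<open>K_f\<close>: infimum of admissible \<open>K \<ge> 0\<close>; \<open>Inf {} = \<infinity>\<close>.\<close>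
definition error_bound_const :: "('a::real_normed_vector \<Rightarrow> ereal) \<Rightarrow> ereal" where
  "error_bound_const f = Inf (ereal ` {K::real. K \<ge> 0 \<and>
      (\<forall>x. ereal (infdist x {y. f y \<le> 0}) \<le> ereal K * max 0 (f x))})"

end

theory Submission
  imports Defs
begin

text \<open>
  Write \<open>|\<nabla>f|(x)\<close> for the slope \<open>sup\<^sub>\<parallel>h\<parallel>\<^sub>\<le>\<^sub>1 -f'(x;h)\<close>. For convex \<open>f\<close> the directional
  derivative is the infimum of the difference quotients, so a point \<open>z\<close> with \<open>f(z) \<le> 0\<close> seen
  from \<open>x\<close> in direction \<open>(z - x)/\<parallel>z - x\<parallel>\<close> gives \<open>|\<nabla>f|(x) \<ge> f(x)/\<parallel>z - x\<parallel>\<close>; an error bound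
  \<open>d(x,S) \<le> K f(x)\<close> thus forces \<open>|\<nabla>f|(x) \<ge> 1/K\<close>.

  Conversely, suppose \<open>|\<nabla>f| > c\<close> wherever \<open>0 < f < \<infinity>\<close>. Ekeland's variational principle for
  \<open>f\<^sup>+\<close> yields \<open>z\<close> with \<open>f\<^sup>+(z) + c\<parallel>z - x\<parallel> \<le> f\<^sup>+(x)\<close> which is the strict minimiser of
  \<open>f\<^sup>+ + c\<parallel>\<cdot> - z\<parallel>\<close>. If \<open>f(z) > 0\<close>, a direction of slope greater than \<open>c\<close> would decrease this
  function, so \<open>f(z) \<le> 0\<close> and \<open>d(x,S) \<le> f(x)/c\<close>.
\<close>

section \<open>Lower semicontinuity and convexity\<close>

lemma proper_fun_not_MInf: "proper_fun f \<Longrightarrow> f x \<noteq> -\<infinity>"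
  unfolding proper_fun_def by auto

lemma lsc_fun_eventually_greater:
  assumes "lsc_fun f" and "c < f x"
  shows "\<forall>\<^sub>F y in nhds x. c < f y"
proof -
  have "\<forall>\<^sub>F y in at x. c < f y"
    using assms unfolding lsc_fun_def le_Liminf_iff by blast
  then have "\<forall>\<^sub>F y in nhds x. y \<noteq> x \<longrightarrow> c < f y" by (simp add: eventually_at_filter)
  then show ?thesis by (rule eventually_mono) (metis assms(2))
qed

lemma lsc_fun_closed_epigraph:
  fixes f :: "'a::topological_space \<Rightarrow> ereal"
  assumes "lsc_fun f"
  shows "closed {(x, r::real). f x \<le> ereal r}"
  unfolding closed_def
proof (rule open_prod_intro)
  fix p assume "p \<in> - {(x, r). f x \<le> ereal r}"
  then obtain x r where p: "p = (x, r)" and "ereal r < f x" by (cases p) auto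
  then obtain r' where r': "r < r'" "ereal r' < f x"
    using ereal_dense2[OF \<open>ereal r < f x\<close>] by auto
  obtain U where U: "open U" "x \<in> U" "\<And>y. y \<in> U \<Longrightarrow> ereal r' < f y"
    using lsc_fun_eventually_greater[OF assms r'(2)] unfolding eventually_nhds by blast
  have "ereal s < f y" if "y \<in> U" "s < r'" for y s
    using U(3)[OF that(1)] that(2) by (simp add: order.strict_trans[of _ "ereal r'"])
  then have "U \<times> {..<r'} \<subseteq> - {(x, r). f x \<le> ereal r}"
    by (auto simp: not_le) (metis leD)
  then show "\<exists>A B. open A \<and> open B \<and> p \<in> A \<times> B \<and> A \<times> B \<subseteq> - {(x, r). f x \<le> ereal r}"
    using U r' p by (intro exI[of _ U] exI[of _ "{..<r'}"]) auto
qed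

lemma closed_epigraph_pos_part:
  assumes "proper_fun f" and "lsc_fun f"
  shows "closed {(x, r). f x \<noteq> \<infinity> \<and> max 0 (real_of_ereal (f x)) \<le> r}"
proof -
  have "{(x, r). f x \<noteq> \<infinity> \<and> max 0 (real_of_ereal (f x)) \<le> r} =
      {(x, r). f x \<le> ereal r} \<inter> UNIV \<times> {0..}"
    using proper_fun_not_MInf[OF assms(1)] by (force simp: real_le_ereal_iff)
  then show ?thesis
    using lsc_fun_closed_epigraph[OF assms(2)] by (simp add: closed_Int closed_Times)
qed

lemma convex_funD:
  assumes "convex_fun f" "f x = ereal a" "f y = ereal b" "0 \<le> u" "u \<le> 1"
  shows "f ((1 - u) *\<^sub>R x + u *\<^sub>R y) \<le> ereal ((1 - u) * a + u * b)"
proof -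
  let ?E = "{(x, r::real). f x \<le> ereal r}"
  have "(x, a) \<in> ?E" "(y, b) \<in> ?E" using assms(2,3) by auto
  then have "(1 - u) *\<^sub>R (x, a) + u *\<^sub>R (y, b) \<in> ?E"
    using assms(1,4,5) unfolding convex_fun_def by (intro convexD) auto
  then show ?thesis by simp
qed

lemma convex_fun_diff_quotient_mono:
  assumes cf: "convex_fun f" and pf: "proper_fun f" and fx: "f x = ereal a"
    and st: "0 < s" "s \<le> t"
  shows "(f (x + s *\<^sub>R h) - f x) / ereal s \<le> (f (x + t *\<^sub>R h) - f x) / ereal t"
proof (cases "f (x + t *\<^sub>R h)")
  case PInf
  then show ?thesis using st fx by (simp add: divide_ereal_def)
next
  case MInf
  then show ?thesis using proper_fun_not_MInf[OF pf] by blast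
next
  case (real b)
  define u where "u = s / t"
  have u: "0 \<le> u" "u \<le> 1" using st by (auto simp: u_def)
  have "x + s *\<^sub>R h = (1 - u) *\<^sub>R x + u *\<^sub>R (x + t *\<^sub>R h)"
    using st by (simp add: u_def algebra_simps)
  then have "f (x + s *\<^sub>R h) \<le> ereal ((1 - u) * a + u * b)"
    using convex_funD[OF cf fx real u] by simp
  then obtain c where c: "f (x + s *\<^sub>R h) = ereal c" "c - a \<le> u * (b - a)"
    using proper_fun_not_MInf[OF pf, of "x + s *\<^sub>R h"]
    by (cases "f (x + s *\<^sub>R h)") (auto simp: algebra_simps)
  have "(c - a) / s \<le> u * (b - a) / s" using c(2) st by (simp add: divide_right_mono)
  also have "\<dots> = (b - a) / t" using st by (simp add: u_def field_simps)
  finally show ?thesis using c real fx st by (simp add: divide_ereal_def inverse_eq_divide)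
qed

lemma tendsto_at_right_INF:
  fixes q :: "real \<Rightarrow> 'b::{complete_linorder, linorder_topology}"
  assumes mono: "\<And>s t. 0 < s \<Longrightarrow> s \<le> t \<Longrightarrow> q s \<le> q t"
  shows "(q \<longlongrightarrow> (INF t\<in>{0<..}. q t)) (at_right 0)"
proof (rule order_tendstoI)
  fix y assume "y < (INF t\<in>{0<..}. q t)"
  then have "\<forall>t>0. y < q t" by (auto simp: less_INF_D)
  then show "\<forall>\<^sub>F t in at_right 0. y < q t"
    by (auto simp: eventually_at_right[of 0 1] intro!: exI[of _ 1])
next
  fix y assume "(INF t\<in>{0<..}. q t) < y"
  then obtain t where t: "0 < t" "q t < y" by (auto simp: INF_less_iff)
  then have "\<forall>s>0. s < t \<longrightarrow> q s < y"
    using mono by (meson less_imp_le order_le_less_trans)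
  then show "\<forall>\<^sub>F s in at_right 0. q s < y"
    using t by (auto simp: eventually_at_right[of 0 1] intro!: exI[of _ t])
qed

lemma tendsto_diff_quotient_INF:
  assumes cf: "convex_fun f" and pf: "proper_fun f" and fx: "f x \<noteq> \<infinity>"
  shows "((\<lambda>t. (f (x + t *\<^sub>R h) - f x) / ereal t) \<longlongrightarrow>
      (INF t\<in>{0<..}. (f (x + t *\<^sub>R h) - f x) / ereal t)) (at_right 0)"
proof -
  obtain a where "f x = ereal a" using fx proper_fun_not_MInf[OF pf] by (cases "f x") auto
  then show ?thesis
    by (intro tendsto_at_right_INF convex_fun_diff_quotient_mono[OF cf pf])
qed

lemma dir_deriv_eq_INF:
  assumes "convex_fun f" and "proper_fun f" and "f x \<noteq> \<infinity>"
  shows "dir_deriv f x h = (INF t\<in>{0<..}. (f (x + t *\<^sub>R h) - f x) / ereal t)"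
  unfolding dir_deriv_def using tendsto_diff_quotient_INF[OF assms] by (intro tendsto_Lim) auto

lemma tendsto_dir_deriv:
  assumes "convex_fun f" and "proper_fun f" and "f x \<noteq> \<infinity>"
  shows "((\<lambda>t. (f (x + t *\<^sub>R h) - f x) / ereal t) \<longlongrightarrow> dir_deriv f x h) (at_right 0)"
  unfolding dir_deriv_eq_INF[OF assms] by (rule tendsto_diff_quotient_INF[OF assms])

lemma dir_deriv_le_diff_quotient:
  assumes "convex_fun f" and "proper_fun f" and "f x \<noteq> \<infinity>" and "0 < t"
  shows "dir_deriv f x h \<le> (f (x + t *\<^sub>R h) - f x) / ereal t"
  unfolding dir_deriv_eq_INF[OF assms(1-3)] using assms(4) by (intro INF_lower) auto

section \<open>Ekeland's variational principle\<close>

definition ekeland_set :: "('a::metric_space \<Rightarrow> real) \<Rightarrow> 'a set \<Rightarrow> real \<Rightarrow> 'a \<Rightarrow> 'a set" where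
  "ekeland_set g D c x = {y \<in> D. g y + c * dist y x \<le> g x}"

lemma ekeland_set_refl: "x \<in> D \<Longrightarrow> x \<in> ekeland_set g D c x"
  by (simp add: ekeland_set_def)

lemma ekeland_set_trans:
  assumes "0 \<le> c" and "y \<in> ekeland_set g D c x"
  shows "ekeland_set g D c y \<subseteq> ekeland_set g D c x"
proof
  fix z assume "z \<in> ekeland_set g D c y"
  moreover have "c * dist z x \<le> c * dist z y + c * dist y x"
    using assms(1) dist_triangle[of z x y] by (simp add: mult_left_mono flip: distrib_left)
  ultimately show "z \<in> ekeland_set g D c x"
    using assms(2) by (simp add: ekeland_set_def)
qed

lemma closed_ekeland_set:
  assumes "closed {(x, r). x \<in> D \<and> g x \<le> r}"
  shows "closed (ekeland_set g D c x)"
proof -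
  have "closed ((\<lambda>y. (y, g x - c * dist y x)) -` {(x, r). x \<in> D \<and> g x \<le> r})"
    by (rule continuous_closed_vimage[OF assms]) (intro continuous_intros)
  moreover have "(\<lambda>y. (y, g x - c * dist y x)) -` {(x, r). x \<in> D \<and> g x \<le> r} = ekeland_set g D c x"
    by (auto simp: ekeland_set_def)
  ultimately show ?thesis by simp
qed

lemma ekeland_set_dist_le:
  assumes "bdd_below (g ` D)" and "0 \<le> c"
    and "y \<in> ekeland_set g D c x" and "g y \<le> Inf (g ` ekeland_set g D c x) + e"
    and "z \<in> ekeland_set g D c y"
  shows "c * dist z y \<le> e"
proof -
  have "z \<in> ekeland_set g D c x"
    using ekeland_set_trans[OF assms(2,3)] assms(5) by blast
  moreover have "bdd_below (g ` ekeland_set g D c x)"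
    using assms(1) by (rule bdd_below_mono) (auto simp: ekeland_set_def)
  ultimately have "Inf (g ` ekeland_set g D c x) \<le> g z"
    by (intro cInf_lower) auto
  then show ?thesis
    using assms(4,5) by (simp add: ekeland_set_def)
qed

theorem ekeland_variational_principle:
  fixes g :: "'a::complete_space \<Rightarrow> real"
  assumes closed_epi: "closed {(x, r). x \<in> D \<and> g x \<le> r}"
    and bdd: "bdd_below (g ` D)" and x0: "x0 \<in> D" and c: "0 < c"
  shows "\<exists>z\<in>D. g z + c * dist z x0 \<le> g x0 \<and> (\<forall>y\<in>D. g y + c * dist y z \<le> g z \<longrightarrow> y = z)"
proof -
  let ?E = "ekeland_set g D c"
  have "\<exists>y. x \<in> D \<longrightarrow> y \<in> ?E x \<and> g y \<le> Inf (g ` ?E x) + (1/2)^n" for x n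
  proof (cases "x \<in> D")
    case True
    have "\<exists>v\<in>g ` ?E x. v < Inf (g ` ?E x) + (1/2)^n"
      by (rule cInf_lessD) (use ekeland_set_refl[OF True] in auto)
    then show ?thesis by auto
  qed auto
  then obtain nxt where nxt: "\<And>x n. x \<in> D \<Longrightarrow> nxt x n \<in> ?E x \<and> g (nxt x n) \<le> Inf (g ` ?E x) + (1/2)^n"
    by metis
  define xs where "xs = rec_nat x0 (\<lambda>n x. nxt x n)"
  have xs_Suc: "xs (Suc n) = nxt (xs n) n" for n by (simp add: xs_def)
  have xs_D: "xs n \<in> D" for n
    by (induction n) (use x0 nxt in \<open>auto simp: xs_def ekeland_set_def\<close>)
  have xs_step: "xs (Suc n) \<in> ?E (xs n)" "g (xs (Suc n)) \<le> Inf (g ` ?E (xs n)) + (1/2)^n" for n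
    using nxt[OF xs_D] xs_Suc by simp_all
  have decr: "?E (xs n) \<subseteq> ?E (xs m)" if "m \<le> n" for m n
    using that
  proof (induction n rule: dec_induct)
    case (step n)
    then show ?case using ekeland_set_trans[OF less_imp_le[OF c] xs_step(1)] by blast
  qed simp
  have shrink: "dist y (xs (Suc n)) \<le> (1/2)^n / c" if "y \<in> ?E (xs (Suc n))" for y n
  proof -
    have "c * dist y (xs (Suc n)) \<le> (1/2)^n"
      using xs_step by (rule ekeland_set_dist_le[OF bdd less_imp_le[OF c] _ _ that])
    then show ?thesis using c by (simp add: field_simps)
  qed
  obtain z where z: "\<Inter>(range (\<lambda>n. ?E (xs n))) = {z}"
  proof (atomize_elim, rule decreasing_closed_nest_sing)
    show "closed (?E (xs n))" for n using closed_epi by (rule closed_ekeland_set)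
    show "?E (xs n) \<noteq> {}" for n using ekeland_set_refl[OF xs_D] by blast
    show "m \<le> n \<Longrightarrow> ?E (xs n) \<subseteq> ?E (xs m)" for m n by (rule decr)
    fix e :: real assume "0 < e"
    then obtain N where N: "(1/2::real)^N < e * c / 2"
      using real_arch_pow_inv[of "e*c/2" "1/2"] c by auto
    have "dist y y' < e" if "y \<in> ?E (xs (Suc N))" "y' \<in> ?E (xs (Suc N))" for y y'
    proof -
      have "dist y y' \<le> dist y (xs (Suc N)) + dist y' (xs (Suc N))" by (rule dist_triangle2)
      also have "\<dots> \<le> 2 * ((1/2)^N / c)" using shrink[OF that(1)] shrink[OF that(2)] by simp
      also have "\<dots> < e" using N c by (simp add: field_simps)
      finally show ?thesis .
    qed
    then show "\<exists>n. \<forall>y\<in>?E (xs n). \<forall>y'\<in>?E (xs n). dist y y' < e" by blast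
  qed
  then have zE: "z \<in> ?E (xs n)" for n by blast
  show ?thesis
  proof (intro bexI conjI ballI impI)
    show "z \<in> D" "g z + c * dist z x0 \<le> g x0"
      using zE[of 0] by (simp_all add: xs_def ekeland_set_def)
    fix y assume "y \<in> D" "g y + c * dist y z \<le> g z"
    then have "y \<in> ?E z" by (simp add: ekeland_set_def)
    then have "y \<in> ?E (xs n)" for n using ekeland_set_trans[OF _ zE[of n]] c by auto
    then show "y = z" using z by blast
  qed
qed

section \<open>The slope of a convex function\<close>

definition descent_slope :: "('a::real_normed_vector \<Rightarrow> ereal) \<Rightarrow> 'a \<Rightarrow> ereal" where
  "descent_slope f x = (SUP h\<in>cball 0 1. - dir_deriv f x h)"

lemma descent_slope_nonneg:
  assumes cf: "convex_fun f" and pf: "proper_fun f" and fx: "f x \<noteq> \<infinity>"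
  shows "0 \<le> descent_slope f x"
proof -
  obtain a where a: "f x = ereal a" using fx proper_fun_not_MInf[OF pf, of x] by (cases "f x") auto
  have "dir_deriv f x 0 = (INF t\<in>{0::real<..}. 0)"
    unfolding dir_deriv_eq_INF[OF cf pf fx] using a by (intro INF_cong) auto
  then have "- dir_deriv f x 0 = 0" by simp
  moreover have "- dir_deriv f x 0 \<le> descent_slope f x"
    unfolding descent_slope_def by (rule SUP_upper) simp
  ultimately show ?thesis by simp
qed

lemma diff_quotient_le_descent_slope:
  assumes cf: "convex_fun f" and pf: "proper_fun f"
    and fx: "f x = ereal a" and fz: "f z = ereal b" and "z \<noteq> x"
  shows "ereal ((a - b) / dist x z) \<le> descent_slope f x"
proof -
  define t where "t = dist x z"
  have t: "0 < t" using \<open>z \<noteq> x\<close> by (simp add: t_def)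
  define h where "h = (1 / t) *\<^sub>R (z - x)"
  have h: "h \<in> cball 0 1" using t by (simp add: h_def t_def dist_norm norm_minus_commute)
  have "x + t *\<^sub>R h = z" using t by (simp add: h_def)
  have "dir_deriv f x h \<le> (f (x + t *\<^sub>R h) - f x) / ereal t"
    using fx by (intro dir_deriv_le_diff_quotient[OF cf pf _ t]) simp
  also have "\<dots> = ereal ((b - a) / t)"
    using \<open>x + t *\<^sub>R h = z\<close> fx fz t by (simp add: divide_ereal_def inverse_eq_divide)
  finally have "dir_deriv f x h \<le> ereal ((b - a) / t)" .
  then have "- ereal ((b - a) / t) \<le> - dir_deriv f x h" by (simp only: ereal_minus_le_minus)
  then have "ereal ((a - b) / t) \<le> - dir_deriv f x h" by (simp add: minus_divide_left)
  also have "\<dots> \<le> descent_slope f x" unfolding descent_slope_def using h by (rule SUP_upper)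
  finally show ?thesis by (simp add: t_def)
qed

lemma inverse_le_descent_slope:
  assumes cf: "convex_fun f" and pf: "proper_fun f" and fx: "f x = ereal a" and a: "0 < a"
    and S: "{y. f y \<le> 0} \<noteq> {}" and K: "0 \<le> K"
    and bound: "infdist x {y. f y \<le> 0} \<le> K * a"
  shows "inverse (ereal K) \<le> descent_slope f x"
proof (rule dense_le)
  fix y assume y: "y < inverse (ereal K)"
  show "y \<le> descent_slope f x"
  proof (cases "y \<le> 0")
    case True
    then show ?thesis using descent_slope_nonneg[OF cf pf, of x] fx by simp
  next
    case False
    then obtain r where r: "y = ereal r" "0 < r" using y by (cases y) auto
    have "r * K < 1"
    proof (cases "K = 0")
      case False
      then have "r < 1 / K" using y r K by (simp add: inverse_eq_divide)
      then show ?thesis using K False by (simp add: field_simps)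
    qed simp
    then have "K * a < a / r" using a r(2) by (simp add: field_simps)
    then have "infdist x {y. f y \<le> 0} < a / r" using bound by linarith
    then obtain z where z: "f z \<le> 0" "dist x z < a / r"
      using cInf_lessD[of "dist x ` {y. f y \<le> 0}"] S by (auto simp: infdist_notempty)
    obtain b where b: "f z = ereal b" "b \<le> 0"
      using z(1) proper_fun_not_MInf[OF pf, of z] by (cases "f z") auto
    have "z \<noteq> x" using z fx a by auto
    then have "r \<le> (a - b) / dist x z" using z(2) r(2) b(2) by (simp add: field_simps)
    then have "y \<le> ereal ((a - b) / dist x z)" using r by simp
    also have "\<dots> \<le> descent_slope f x"
      by (rule diff_quotient_le_descent_slope[OF cf pf fx b(1) \<open>z \<noteq> x\<close>])
    finally show ?thesis .
  qed
qed

text \<open>Lower semicontinuity keeps \<open>f\<close> positive along short steps from \<open>z\<close>.\<close>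
lemma descent_slope_gtD:
  assumes cf: "convex_fun f" and pf: "proper_fun f" and lf: "lsc_fun f"
    and fz: "f z = ereal a" and a: "0 < a" and c: "0 \<le> c" and sl: "ereal c < descent_slope f z"
  shows "\<exists>y b. f y = ereal b \<and> 0 < b \<and> c * dist y z < a - b"
proof -
  obtain h where h: "norm h \<le> 1" "ereal c < - dir_deriv f z h"
    using sl by (auto simp: descent_slope_def less_SUP_iff)
  define q where "q t = (f (z + t *\<^sub>R h) - f z) / ereal t" for t
  have "- (- dir_deriv f z h) < - ereal c" using h(2) by (simp only: ereal_minus_less_minus)
  then have "dir_deriv f z h < ereal (- c)" by simp
  moreover have "(q \<longlongrightarrow> dir_deriv f z h) (at_right 0)"
    unfolding q_def using fz by (intro tendsto_dir_deriv[OF cf pf]) simp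
  ultimately have ev1: "\<forall>\<^sub>F t in at_right 0. q t < ereal (- c)"
    by (simp add: order_tendstoD(2))
  have "((\<lambda>t. z + t *\<^sub>R h) \<longlongrightarrow> z + 0 *\<^sub>R h) (at_right (0::real))"
    by (intro tendsto_intros)
  then have "((\<lambda>t. z + t *\<^sub>R h) \<longlongrightarrow> z) (at_right (0::real))" by simp
  moreover have "\<forall>\<^sub>F y in nhds z. 0 < f y"
    using lsc_fun_eventually_greater[OF lf, of 0 z] a fz by simp
  ultimately have ev2: "\<forall>\<^sub>F t in at_right 0. 0 < f (z + t *\<^sub>R h)"
    by (rule eventually_compose_filterlim[rotated])
  have ev3: "\<forall>\<^sub>F t in at_right (0::real). 0 < t" by (simp add: eventually_at_right_less)
  obtain t where t: "q t < ereal (- c)" "0 < f (z + t *\<^sub>R h)" "0 < t"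
    using eventually_happens'[OF _ eventually_conj[OF ev1 eventually_conj[OF ev2 ev3]]] by auto
  show ?thesis
  proof (cases "f (z + t *\<^sub>R h)")
    case (real b)
    have "(b - a) / t < - c" using t(1) real fz t(3) by (simp add: q_def divide_ereal_def inverse_eq_divide)
    then have "c * t < a - b" using t(3) by (simp add: field_simps)
    moreover have "c * dist (z + t *\<^sub>R h) z \<le> c * t"
      using h(1) t(3) c by (simp add: dist_norm mult_left_le mult_left_mono)
    ultimately show ?thesis using real t(2) by (intro exI[of _ "z + t *\<^sub>R h"] exI[of _ b]) auto
  next
    case PInf
    then show ?thesis using t(1,3) fz by (simp add: q_def)
  next
    case MInf
    then show ?thesis using t(2) by simp
  qed
qed

lemma infdist_le_of_descent_slope_gt:
  fixes f :: "'a::banach \<Rightarrow> ereal"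
  assumes cf: "convex_fun f" and pf: "proper_fun f" and lf: "lsc_fun f" and c: "0 < c"
    and sl: "\<And>x. 0 < f x \<Longrightarrow> f x < \<infinity> \<Longrightarrow> ereal c < descent_slope f x"
  shows "ereal (infdist x {y. f y \<le> 0}) \<le> ereal (1 / c) * max 0 (f x)"
proof (cases "f x")
  case PInf
  then show ?thesis using c by simp
next
  case MInf
  then show ?thesis using proper_fun_not_MInf[OF pf] by blast
next
  case (real a)
  show ?thesis
  proof (cases "a \<le> 0")
    case True
    then show ?thesis using real c by (simp add: infdist_zero)
  next
    case False
    define g where "g y = max 0 (real_of_ereal (f y))" for y
    have "bdd_below (g ` {y. f y \<noteq> \<infinity>})" by (rule bdd_belowI[of _ 0]) (auto simp: g_def)
    then obtain z where z: "f z \<noteq> \<infinity>" "g z + c * dist z x \<le> g x"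
      and zmin: "\<And>y. f y \<noteq> \<infinity> \<Longrightarrow> g y + c * dist y z \<le> g z \<Longrightarrow> y = z"
      using ekeland_variational_principle[of "{y. f y \<noteq> \<infinity>}" g x c]
        closed_epigraph_pos_part[OF pf lf] c real
      unfolding g_def by auto
    have "f z \<le> 0"
    proof (rule ccontr)
      assume "\<not> f z \<le> 0"
      then obtain d where d: "f z = ereal d" "0 < d" using z(1) by (cases "f z") auto
      obtain y b where y: "f y = ereal b" "0 < b" "c * dist y z < d - b"
        using descent_slope_gtD[OF cf pf lf d less_imp_le[OF c]] sl[of z] d by auto
      then have "g y + c * dist y z \<le> g z" using d by (simp add: g_def)
      then have "y = z" using zmin y by auto
      then show False using y d by simp
    qed
    have "c * dist z x \<le> a" using z(2) real False by (simp add: g_def)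
    then have "infdist x {y. f y \<le> 0} \<le> a / c"
      using \<open>f z \<le> 0\<close> c by (intro infdist_le2) (auto simp: field_simps dist_commute)
    then show ?thesis using real False c by simp
  qed
qed

lemma ereal_inverse_le_swap:
  fixes a b :: ereal
  assumes "0 \<le> a" and "0 \<le> b" and "inverse a \<le> b"
  shows "inverse b \<le> a"
proof -
  have "inverse b \<le> inverse (inverse a)"
    using assms by (intro ereal_inverse_antimono) (auto simp: inverse_ereal_ge0I)
  then show ?thesis using assms(1) by (simp add: ereal_inv_inv)
qed

lemma error_bound_const_nonneg: "0 \<le> error_bound_const f"
  unfolding error_bound_const_def by (rule Inf_greatest) auto

lemma inverse_error_bound_const_le_descent_slope:
  assumes cf: "convex_fun f" and pf: "proper_fun f" and S: "{y. f y \<le> 0} \<noteq> {}"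
    and "0 < f x" and "f x < \<infinity>"
  shows "inverse (error_bound_const f) \<le> descent_slope f x"
proof -
  obtain a where a: "f x = ereal a" "0 < a" using assms(4,5) by (cases "f x") auto
  have slope: "0 \<le> descent_slope f x" using descent_slope_nonneg[OF cf pf] a by simp
  have "inverse (descent_slope f x) \<le> error_bound_const f"
    unfolding error_bound_const_def
  proof (rule Inf_greatest)
    fix k assume "k \<in> ereal ` {K. 0 \<le> K \<and> (\<forall>x. ereal (infdist x {y. f y \<le> 0}) \<le> ereal K * max 0 (f x))}"
    then obtain K where k: "k = ereal K" and K: "0 \<le> K"
      and bound: "ereal (infdist x {y. f y \<le> 0}) \<le> ereal K * max 0 (f x)" by blast
    have "max 0 (f x) = ereal a" using a by (simp add: max_absorb2)
    then have "infdist x {y. f y \<le> 0} \<le> K * a" using bound by simp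
    then have "inverse (ereal K) \<le> descent_slope f x"
      by (rule inverse_le_descent_slope[OF cf pf a S K])
    then show "inverse (descent_slope f x) \<le> k"
      unfolding k by (rule ereal_inverse_le_swap[rotated 2]) (simp_all add: K slope)
  qed
  then show ?thesis
    by (rule ereal_inverse_le_swap[rotated 2]) (simp_all add: slope error_bound_const_nonneg)
qed

lemma error_bound_const_le_inverse:
  fixes f :: "'a::banach \<Rightarrow> ereal"
  assumes "convex_fun f" and "proper_fun f" and "lsc_fun f" and "0 < c"
    and "\<And>x. 0 < f x \<Longrightarrow> f x < \<infinity> \<Longrightarrow> ereal c < descent_slope f x"
  shows "error_bound_const f \<le> ereal (1 / c)"
proof -
  have "1 / c \<in> {K. 0 \<le> K \<and> (\<forall>x. ereal (infdist x {y. f y \<le> 0}) \<le> ereal K * max 0 (f x))}"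
    using infdist_le_of_descent_slope_gt[OF assms] assms(4) by simp
  then show ?thesis
    unfolding error_bound_const_def by (intro Inf_lower imageI)
qed

theorem mainTheorem9:
  fixes f :: "'a::banach \<Rightarrow> ereal"
  assumes "proper_fun f" and "lsc_fun f" and "convex_fun f"
    and "{x. f x \<le> 0} \<noteq> {}"
  shows "inverse (error_bound_const f) =
    Inf {(SUP h\<in>cball 0 1. - dir_deriv f x h) | x. 0 < f x \<and> f x < \<infinity>}"
  unfolding descent_slope_def[symmetric]
proof (rule antisym)
  let ?M = "Inf {descent_slope f x | x. 0 < f x \<and> f x < \<infinity>}"
  show "inverse (error_bound_const f) \<le> ?M"
    using inverse_error_bound_const_le_descent_slope[OF assms(3,1,4)] by (auto intro: Inf_greatest)
  show "?M \<le> inverse (error_bound_const f)"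
  proof (rule dense_le)
    fix y assume y: "y < ?M"
    show "y \<le> inverse (error_bound_const f)"
    proof (cases "y \<le> 0")
      case True
      then show ?thesis
        using inverse_ereal_ge0I[OF error_bound_const_nonneg] by (rule order_trans)
    next
      case False
      then obtain c where c: "y = ereal c" "0 < c" using y by (cases y) auto
      have "ereal c < descent_slope f x" if "0 < f x" "f x < \<infinity>" for x
      proof -
        have "?M \<le> descent_slope f x" using that by (intro Inf_lower) auto
        then show ?thesis using y c(1) by simp
      qed
      then have "error_bound_const f \<le> ereal (1 / c)"
        by (intro error_bound_const_le_inverse[OF assms(3,1,2) c(2)])
      then have "inverse (ereal (1 / c)) \<le> inverse (error_bound_const f)"
        by (rule ereal_inverse_antimono[OF error_bound_const_nonneg])
      then show ?thesis using c by simp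
    qed
  qed
qed

end
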